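(* Over any commutative ring $R$, the $\mathcal S$-complex $\widetilde{\mathcal O}(1)\otimes\widetilde{\mathcal O}(-1)$ is $\mathcal S$-chain homotopy equivalent to $\widetilde{\mathcal O}(0)$.
   Context: Graded modules are $\mathbb Z$-graded; $V[i]_j=V_{i+j}$; differentials have degree $-1$; $\epsilon$ is the sign map ($(-1)^i$ on degree $i$). An $\mathcal S$-complex over $R$ is a chain complex $(\widetilde C,\widetilde d)$ of finitely generated free graded $R$-modules with a graded decomposition $\widetilde C=C\oplus C[-1]\oplus\mathsf R$ in which $\widetilde d=\begin{pmatrix} d&0&0\\ v&-d&\delta_2\\ \delta_1&0&r\end{pmatrix}$; $\chi$ denotes the degree $1$ map sending $C$ identically onto $C[-1]$ and zero on $C[-1]\oplus\mathsf R$. A morphism is a degree $0$ chain map commuting with the $\chi$'s; an $\mathcal S$-chain homotopy between morphisms is a degree $1$ map $\widetilde K$ with $\chi'\widetilde K+\widetilde K\chi=0$ and $\widetilde d'\widetilde K+\widetilde K\widetilde d$ equal to their difference; an $\mathcal S$-chain homotopy equivalence is a pair of morphisms whose composites are $\mathcal S$-chain homotopic to identities. The tensor product of $\mathcal S$-complexes is the tensor product chain complex (differential $\widetilde d\otimes 1+\epsilon\otimes\widetilde d'$) with $\chi^\otimes=\chi\otimes1+\epsilon\otimes\chi'$. $\widetilde{\mathcal O}(1)$: $C=R$ in degree $1$, $\mathsf R=R$ in degree $0$, $d=v=\delta_2=r=0$, $\delta_1=\mathrm{id}_R$. $\widetilde{\mathcal O}(-1)$: $C=R$ in degree $-2$,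 $\mathsf R=R$ in degree $0$, $d=v=\delta_1=r=0$, $\delta_2=\mathrm{id}_R$. $\widetilde{\mathcal O}(0)$: $C=0$, $\mathsf R=R$ in degree $0$, zero differential. *)

theory Defs
  imports Main
begin

text \<open>
  Finitely generated free graded R-modules are represented by a finite basis
  (a set of basis elements of some type) together with a degree function.
  A graded R-linear map between such modules is represented by its matrix
  m :: target basis => source basis => R  (m y x = coefficient of y in the image of x).
\<close>

record ('b, 'r) cx =
  bas :: "'b set"
  deg :: "'b \<Rightarrow> int"
  dif :: "'b \<Rightarrow> 'b \<Rightarrow> 'r"
  chi :: "'b \<Rightarrow> 'b \<Rightarrow> 'r"

definition mmul :: "'b set \<Rightarrow> ('c \<Rightarrow> 'b \<Rightarrow> 'r::comm_ring_1) \<Rightarrow> ('b \<Rightarrow> 'a \<Rightarrow> 'r) \<Rightarrow> 'c \<Rightarrow> 'a \<Rightarrow> 'r" where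
  "mmul S g f = (\<lambda>z x. \<Sum>y\<in>S. g z y * f y x)"

definition idm :: "('b, 'r::comm_ring_1, 'z) cx_scheme \<Rightarrow> 'b \<Rightarrow> 'b \<Rightarrow> 'r" where
  "idm A = (\<lambda>y x. if y = x \<and> x \<in> bas A then 1 else 0)"

definition gmap :: "('b, 'r::comm_ring_1, 'z) cx_scheme \<Rightarrow> ('c, 'r, 'w) cx_scheme \<Rightarrow> int
    \<Rightarrow> ('c \<Rightarrow> 'b \<Rightarrow> 'r) \<Rightarrow> bool" where
  "gmap A B k f \<longleftrightarrow> (\<forall>y x. f y x \<noteq> 0 \<longrightarrow> x \<in> bas A \<and> y \<in> bas B \<and> deg B y = deg A x + k)"

definition s_morphism :: "('b, 'r::comm_ring_1) cx \<Rightarrow> ('c, 'r) cx \<Rightarrow> ('c \<Rightarrow> 'b \<Rightarrow> 'r) \<Rightarrow> bool" where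
  "s_morphism A B f \<longleftrightarrow> gmap A B 0 f
     \<and> mmul (bas B) (dif B) f = mmul (bas A) f (dif A)
     \<and> mmul (bas B) (chi B) f = mmul (bas A) f (chi A)"

definition s_homotopic :: "('b, 'r::comm_ring_1) cx \<Rightarrow> ('c, 'r) cx
    \<Rightarrow> ('c \<Rightarrow> 'b \<Rightarrow> 'r) \<Rightarrow> ('c \<Rightarrow> 'b \<Rightarrow> 'r) \<Rightarrow> bool" where
  "s_homotopic A B f g \<longleftrightarrow> (\<exists>K. gmap A B 1 K
     \<and> (\<forall>y x. mmul (bas B) (chi B) K y x + mmul (bas A) K (chi A) y x = 0)
     \<and> (\<forall>y x. mmul (bas B) (dif B) K y x + mmul (bas A) K (dif A) y x = f y x - g y x))"

definition s_heq :: "('b, 'r::comm_ring_1) cx \<Rightarrow> ('c, 'r) cx \<Rightarrow> bool" where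
  "s_heq A B \<longleftrightarrow> (\<exists>f g. s_morphism A B f \<and> s_morphism B A g
     \<and> s_homotopic A A (mmul (bas B) g f) (idm A)
     \<and> s_homotopic B B (mmul (bas A) f g) (idm B))"

text \<open>S-complexes: basis of C~ = C + C[-1] + R\<close>
datatype ('c, 'e) sb = SC 'c | SCs 'c | SR 'e

definition sdeg :: "('c \<Rightarrow> int) \<Rightarrow> ('e \<Rightarrow> int) \<Rightarrow> ('c, 'e) sb \<Rightarrow> int" where
  "sdeg dC dR b = (case b of SC x \<Rightarrow> dC x | SCs x \<Rightarrow> dC x + 1 | SR e \<Rightarrow> dR e)"

fun sdif0 :: "('c \<Rightarrow> 'c \<Rightarrow> 'r::comm_ring_1) \<Rightarrow> ('c \<Rightarrow> 'c \<Rightarrow> 'r) \<Rightarrow> ('e \<Rightarrow> 'c \<Rightarrow> 'r)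
    \<Rightarrow> ('c \<Rightarrow> 'e \<Rightarrow> 'r) \<Rightarrow> ('e \<Rightarrow> 'e \<Rightarrow> 'r) \<Rightarrow> ('c, 'e) sb \<Rightarrow> ('c, 'e) sb \<Rightarrow> 'r" where
  "sdif0 d v d1 d2 r (SC y) (SC x) = d y x"
| "sdif0 d v d1 d2 r (SCs y) (SC x) = v y x"
| "sdif0 d v d1 d2 r (SR y) (SC x) = d1 y x"
| "sdif0 d v d1 d2 r (SCs y) (SCs x) = - d y x"
| "sdif0 d v d1 d2 r (SCs y) (SR x) = d2 y x"
| "sdif0 d v d1 d2 r (SR y) (SR x) = r y x"
| "sdif0 d v d1 d2 r _ _ = 0"

fun schi0 :: "('c, 'e) sb \<Rightarrow> ('c, 'e) sb \<Rightarrow> 'r::comm_ring_1" where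
  "schi0 (SCs y) (SC x) = (if y = x then 1 else 0)"
| "schi0 _ _ = 0"

definition scx :: "'c set \<Rightarrow> ('c \<Rightarrow> int) \<Rightarrow> 'e set \<Rightarrow> ('e \<Rightarrow> int)
    \<Rightarrow> ('c \<Rightarrow> 'c \<Rightarrow> 'r::comm_ring_1) \<Rightarrow> ('c \<Rightarrow> 'c \<Rightarrow> 'r) \<Rightarrow> ('e \<Rightarrow> 'c \<Rightarrow> 'r)
    \<Rightarrow> ('c \<Rightarrow> 'e \<Rightarrow> 'r) \<Rightarrow> ('e \<Rightarrow> 'e \<Rightarrow> 'r) \<Rightarrow> (('c, 'e) sb, 'r) cx" where
  "scx BC dC BR dR d v d1 d2 r =
     (let B = SC ` BC \<union> SCs ` BC \<union> SR ` BR in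
      \<lparr> bas = B, deg = sdeg dC dR,
        dif = (\<lambda>y x. if y \<in> B \<and> x \<in> B then sdif0 d v d1 d2 r y x else 0),
        chi = (\<lambda>y x. if y \<in> B \<and> x \<in> B then schi0 y x else 0) \<rparr>)"

definition epsn :: "int \<Rightarrow> 'r::comm_ring_1" where
  "epsn i = (if even i then 1 else -1)"

text \<open>tensor product: differential d\<otimes>1 + eps\<otimes>d', chi\<otimes>1 + eps\<otimes>chi'\<close>
definition tensor :: "('b, 'r::comm_ring_1) cx \<Rightarrow> ('c, 'r) cx \<Rightarrow> ('b \<times> 'c, 'r) cx" where
  "tensor A B =
     (let S = bas A \<times> bas B;
          t = (\<lambda>mA mB (y', z') (y, z). if (y', z') \<in> S \<and> (y, z) \<in> S then
                 (if z' = z then mA y' y else 0) + (if y' = y then epsn (deg A y) * mB z' z else 0)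
               else 0)
      in \<lparr> bas = S, deg = (\<lambda>(y, z). deg A y + deg B z),
           dif = t (dif A) (dif B), chi = t (chi A) (chi B) \<rparr>)"

definition O_pos :: "((unit, unit) sb, 'r::comm_ring_1) cx" where
  "O_pos = scx {()} (\<lambda>_. 1) {()} (\<lambda>_. 0) (\<lambda>_ _. 0) (\<lambda>_ _. 0) (\<lambda>_ _. 1) (\<lambda>_ _. 0) (\<lambda>_ _. 0)"

definition O_neg :: "((unit, unit) sb, 'r::comm_ring_1) cx" where
  "O_neg = scx {()} (\<lambda>_. -2) {()} (\<lambda>_. 0) (\<lambda>_ _. 0) (\<lambda>_ _. 0) (\<lambda>_ _. 0) (\<lambda>_ _. 1) (\<lambda>_ _. 0)"

definition O_zero :: "((unit, unit) sb, 'r::comm_ring_1) cx" where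
  "O_zero = scx {} (\<lambda>_. 0) {()} (\<lambda>_. 0) (\<lambda>_ _. 0) (\<lambda>_ _. 0) (\<lambda>_ _. 0) (\<lambda>_ _. 0) (\<lambda>_ _. 0)"

end

theory Submission
  imports Defs
begin

text \<open>
  Writing basis elements of \<open>O(1) \<otimes> O(-1)\<close> as pairs, the degree 0 element
  \<open>(SR, SR) - (SC, SCs) + (SCs, SC)\<close> is a cycle annihilated by \<open>\<chi>\<close>, so it spans a copy
  of \<open>O(0)\<close>. Summing the coefficients of the three degree 0 generators
  \<open>(SR, SR), (SC, SCs), (SCs, SC)\<close> is a morphism back to \<open>O(0)\<close> which is a left inverse
  of this inclusion, and the other composite is connected to the identity by an explicit
  degree 1 homotopy anticommuting with \<open>\<chi>\<close>.
\<close>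

lemma s_homotopic_refl: "s_homotopic A B f f"
  unfolding s_homotopic_def gmap_def mmul_def
  by (rule exI[of _ "\<lambda>_ _. 0"]) simp

lemma s_heqI_retract:
  assumes "s_morphism A B f" and "s_morphism B A g"
    and "mmul (bas A) f g = idm B"
    and "s_homotopic A A (mmul (bas B) g f) (idm A)"
  shows "s_heq A B"
  unfolding s_heq_def using assms s_homotopic_refl by metis

lemma bas_tensor: "bas (tensor A B) = bas A \<times> bas B"
  by (simp add: tensor_def)

lemma deg_tensor: "deg (tensor A B) (y, z) = deg A y + deg B z"
  by (simp add: tensor_def)

lemma dif_tensor_UNIV:
  assumes "bas A = UNIV" and "bas B = UNIV"
  shows "dif (tensor A B) (y', z') (y, z) =
    (if z' = z then dif A y' y else 0) + (if y' = y then epsn (deg A y) * dif B z' z else 0)"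
  by (simp add: tensor_def assms)

lemma chi_tensor_UNIV:
  assumes "bas A = UNIV" and "bas B = UNIV"
  shows "chi (tensor A B) (y', z') (y, z) =
    (if z' = z then chi A y' y else 0) + (if y' = y then epsn (deg A y) * chi B z' z else 0)"
  by (simp add: tensor_def assms)

type_synonym sb1 = "(unit, unit) sb"

lemma all_sb1: "(\<forall>x::sb1. P x) \<longleftrightarrow> P (SC ()) \<and> P (SCs ()) \<and> P (SR ())"
  by (metis (full_types) old.unit.exhaust sb.exhaust)

lemma UNIV_sb1: "(UNIV :: sb1 set) = {SC (), SCs (), SR ()}"
  using all_sb1[of "\<lambda>x. x \<in> {SC (), SCs (), SR ()}"] by auto

lemma sum_UNIV_sb1: "(\<Sum>x\<in>UNIV. f x) = f (SC ()) + f (SCs ()) + f (SR ())"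
  for f :: "sb1 \<Rightarrow> 'a::comm_monoid_add"
  unfolding UNIV_sb1 by (simp add: algebra_simps)

lemma sum_UNIV_sb1_pair:
  fixes f :: "sb1 \<times> sb1 \<Rightarrow> 'a::comm_monoid_add"
  shows "(\<Sum>x\<in>UNIV. f x) =
    (f (SC (), SC ()) + f (SC (), SCs ()) + f (SC (), SR ())) +
    (f (SCs (), SC ()) + f (SCs (), SCs ()) + f (SCs (), SR ())) +
    (f (SR (), SC ()) + f (SR (), SCs ()) + f (SR (), SR ()))"
proof -
  have "(\<Sum>x\<in>UNIV. f x) = (\<Sum>a\<in>UNIV. \<Sum>b\<in>UNIV. f (a, b))"
    by (simp add: sum.cartesian_product flip: UNIV_Times_UNIV)
  then show ?thesis by (simp add: sum_UNIV_sb1)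
qed

lemma O_pos_simps:
  "bas (O_pos :: (sb1, 'r::comm_ring_1) cx) = UNIV"
  "deg (O_pos :: (sb1, 'r) cx) = sdeg (\<lambda>_. 1) (\<lambda>_. 0)"
  "dif (O_pos :: (sb1, 'r) cx) = (\<lambda>y x. if y = SR () \<and> x = SC () then 1 else 0)"
  "chi (O_pos :: (sb1, 'r) cx) = (\<lambda>y x. if y = SCs () \<and> x = SC () then 1 else 0)"
  by (auto simp: O_pos_def scx_def UNIV_sb1 fun_eq_iff all_sb1)

lemma O_neg_simps:
  "bas (O_neg :: (sb1, 'r::comm_ring_1) cx) = UNIV"
  "deg (O_neg :: (sb1, 'r) cx) = sdeg (\<lambda>_. -2) (\<lambda>_. 0)"
  "dif (O_neg :: (sb1, 'r) cx) = (\<lambda>y x. if y = SCs () \<and> x = SR () then 1 else 0)"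
  "chi (O_neg :: (sb1, 'r) cx) = (\<lambda>y x. if y = SCs () \<and> x = SC () then 1 else 0)"
  by (auto simp: O_neg_def scx_def UNIV_sb1 fun_eq_iff all_sb1)

lemma O_zero_simps:
  "bas (O_zero :: (sb1, 'r::comm_ring_1) cx) = {SR ()}"
  "deg (O_zero :: (sb1, 'r) cx) = sdeg (\<lambda>_. 0) (\<lambda>_. 0)"
  "dif (O_zero :: (sb1, 'r) cx) = (\<lambda>_ _. 0)"
  "chi (O_zero :: (sb1, 'r) cx) = (\<lambda>_ _. 0)"
  by (auto simp: O_zero_def scx_def fun_eq_iff all_sb1)

definition proj_O_zero :: "sb1 \<Rightarrow> sb1 \<times> sb1 \<Rightarrow> 'r::comm_ring_1" where
  "proj_O_zero y x =
    (if y = SR () \<and> x \<in> {(SC (), SCs ()), (SCs (), SC ()), (SR (), SR ())} then 1 else 0)"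

definition incl_O_zero :: "sb1 \<times> sb1 \<Rightarrow> sb1 \<Rightarrow> 'r::comm_ring_1" where
  "incl_O_zero y x =
    (if x \<noteq> SR () then 0
     else if y = (SR (), SR ()) \<or> y = (SCs (), SC ()) then 1
     else if y = (SC (), SCs ()) then -1
     else 0)"

definition retract_homotopy :: "sb1 \<times> sb1 \<Rightarrow> sb1 \<times> sb1 \<Rightarrow> 'r::comm_ring_1" where
  "retract_homotopy y x =
    (if y = (SC (), SC ()) \<and> x = (SR (), SC ()) then -1
     else if y = (SC (), SCs ()) \<and> x = (SR (), SCs ()) then -1
     else if y = (SC (), SR ()) \<and> x = (SC (), SCs ()) then 1
     else if y = (SC (), SR ()) \<and> x = (SCs (), SC ()) then 1
     else if y = (SCs (), SC ()) \<and> x = (SR (), SCs ()) then 1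
     else if y = (SCs (), SR ()) \<and> x = (SCs (), SCs ()) then -1
     else 0)"

lemmas O_tensor_simps =
  bas_tensor deg_tensor O_pos_simps O_neg_simps O_zero_simps
  dif_tensor_UNIV[OF O_pos_simps(1) O_neg_simps(1)]
  chi_tensor_UNIV[OF O_pos_simps(1) O_neg_simps(1)]
  sum_UNIV_sb1_pair sdeg_def epsn_def mmul_def idm_def

lemma s_morphism_proj_O_zero:
  "s_morphism (tensor (O_pos :: (sb1, 'r::comm_ring_1) cx) O_neg) O_zero proj_O_zero"
  unfolding s_morphism_def gmap_def fun_eq_iff split_paired_All all_sb1
  by (simp add: O_tensor_simps proj_O_zero_def)

lemma s_morphism_incl_O_zero:
  "s_morphism (O_zero :: (sb1, 'r::comm_ring_1) cx) (tensor O_pos O_neg) incl_O_zero"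
  unfolding s_morphism_def gmap_def fun_eq_iff split_paired_All all_sb1
  by (simp add: O_tensor_simps incl_O_zero_def)

lemma proj_incl_O_zero:
  "mmul (bas (tensor (O_pos :: (sb1, 'r::comm_ring_1) cx) O_neg)) proj_O_zero incl_O_zero
    = idm (O_zero :: (sb1, 'r) cx)"
  unfolding fun_eq_iff all_sb1
  by (simp add: O_tensor_simps proj_O_zero_def incl_O_zero_def)

lemma incl_proj_O_zero_homotopic_id:
  "s_homotopic (tensor (O_pos :: (sb1, 'r::comm_ring_1) cx) O_neg) (tensor O_pos O_neg)
    (mmul (bas (O_zero :: (sb1, 'r) cx)) incl_O_zero proj_O_zero) (idm (tensor O_pos O_neg))"
  unfolding s_homotopic_def
  by (rule exI[of _ retract_homotopy])
    (unfold gmap_def split_paired_All all_sb1,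
     simp add: O_tensor_simps proj_O_zero_def incl_O_zero_def retract_homotopy_def)

theorem lemma2p7:
  shows "s_heq (tensor (O_pos :: ((unit, unit) sb, 'r::comm_ring_1) cx) O_neg) (O_zero :: ((unit, unit) sb, 'r) cx)"
  using s_morphism_proj_O_zero s_morphism_incl_O_zero proj_incl_O_zero
    incl_proj_O_zero_homotopic_id
  by (rule s_heqI_retract)

end
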